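(* Let $n\ge 2$ be an integer that is not a perfect square, and let $a,b$ be positive integers with $a^2-nb^2=1$. Put $u=a+b\sqrt n$, and let $h_j/k_j$ ($j\ge0$) be the convergents of the simple continued fraction expansion of $u$. Then $$\mathcal L\left(\frac1{u^2}\right)=\sum_{k=1}^{\infty}\mathcal L\left(\frac{1}{h_{2k-1}^2}\right).$$
   Context: $\mathcal L$ is the Rogers dilogarithm: for real $z\le1$, $\mathcal L(z)=\mathrm{Li}_2(z)+\tfrac12\log|z|\log(1-z)$, where $\mathrm{Li}_2(z)=\sum_{m\ge1}z^m/m^2$. If $u=[c_0,c_1,c_2,\dots]$ is the simple continued fraction expansion of $u$ ($c_0=\lfloor u\rfloor$, $c_i\ge1$ integers), the numerators and denominators of convergents are defined by $h_{-2}=0,h_{-1}=1,k_{-2}=1,k_{-1}=0$ and $h_i=c_ih_{i-1}+h_{i-2}$, $k_i=c_ik_{i-1}+k_{i-2}$ for $i\ge0$, so that $[c_0,\dots,c_i]=h_i/k_i$. *)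

theory Defs
  imports "HOL-Analysis.Analysis"
begin

text \<open>Dilogarithm as a power series (valid for |z| \<le> 1).\<close>
definition Li2 :: "real \<Rightarrow> real" where
  "Li2 z = (\<Sum>m. z ^ (Suc m) / (real (Suc m))\<^sup>2)"

definition rogers_L :: "real \<Rightarrow> real" where
  "rogers_L z = Li2 z + 1/2 * ln \<bar>z\<bar> * ln (1 - z)"

fun cf_rem :: "real \<Rightarrow> nat \<Rightarrow> real" where
  "cf_rem u 0 = u"
| "cf_rem u (Suc i) = 1 / (cf_rem u i - of_int \<lfloor>cf_rem u i\<rfloor>)"

definition cf_c :: "real \<Rightarrow> nat \<Rightarrow> int" where
  "cf_c u i = \<lfloor>cf_rem u i\<rfloor>"

text \<open>Shifted numerators: cf_hh u j = h_{j-2}, so h_{-2}=0, h_{-1}=1.\<close>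
fun cf_hh :: "real \<Rightarrow> nat \<Rightarrow> int" where
  "cf_hh u 0 = 0"
| "cf_hh u (Suc 0) = 1"
| "cf_hh u (Suc (Suc i)) = cf_c u i * cf_hh u (Suc i) + cf_hh u i"

definition cf_h :: "real \<Rightarrow> nat \<Rightarrow> int" where
  "cf_h u i = cf_hh u (i + 2)"

end

theory Submission
  imports Defs "HOL-Real_Asymp.Real_Asymp"
begin

text \<open>
  The Pell unit u = a + b\<surd>n satisfies u + 1/u = 2a, so its continued fraction is
  [2a - 1; 1, 2a - 2, 1, 2a - 2, \<dots>] and the odd convergent numerators are the Lucas numbers
  h(2k+1) = (u^(k+2) - u^-(k+2)) / (u - 1/u). Put Q = u^2 and P = Q^(k+2). Abel's five-term
  relation for x = (Q - 1) P / (Q (P - 1)) and y = (Q - 1) / (P - 1), whose product is 1/h(2k+1)^2,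
  reads L(xy) = g(P) - g(PQ) with g(P) = L(x) + L(y). Hence the series telescopes to
  g(Q^2) - L(1 - 1/Q) - L(0), and this is L(1/Q) by the reflection formula L(z) + L(1 - z) = const.
  Both functional equations are proved by differentiation on (0, 1).
\<close>

lemma Li2_has_real_derivative_series:
  assumes "\<bar>x\<bar> < 1"
  shows "(Li2 has_real_derivative (\<Sum>n. x ^ n / real (Suc n))) (at x)"
proof -
  have Li2_eq: "Li2 = (\<lambda>z. \<Sum>n. (1 / (real (Suc n))\<^sup>2) * z ^ Suc n)"
    by (simp add: Li2_def fun_eq_iff)
  have coeff: "1 / (real (Suc n))\<^sup>2 * real (Suc n) = 1 / real (Suc n)" for n
    by (simp add: power2_eq_square)
  have "summable (\<lambda>n. 1 / (real (Suc n))\<^sup>2 * real (Suc n) * y ^ n)"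
    if "y \<in> {-1<..<1}" for y :: real
    unfolding coeff
  proof (rule summable_comparison_test[of _ "\<lambda>n. \<bar>y\<bar> ^ n"])
    show "\<exists>N. \<forall>n\<ge>N. norm (1 / real (Suc n) * y ^ n) \<le> \<bar>y\<bar> ^ n"
      by (intro exI[of _ 0] allI impI) (simp add: abs_mult power_abs divide_le_eq mult_le_cancel_left1)
    show "summable (\<lambda>n. \<bar>y\<bar> ^ n)"
      using that by (intro summable_geometric) auto
  qed
  then have "DERIV Li2 x :> (\<Sum>n. 1 / (real (Suc n))\<^sup>2 * real (Suc n) * x ^ n)"
    unfolding Li2_eq using assms by (intro DERIV_power_series'[where R = 1]) auto
  then show ?thesis
    by (simp only: coeff) (simp add: field_simps)
qed

lemma sums_power_div_Suc:
  fixes x :: real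
  assumes "\<bar>x\<bar> < 1" "x \<noteq> 0"
  shows "(\<lambda>n. x ^ n / real (Suc n)) sums (- ln (1 - x) / x)"
proof -
  have "(\<lambda>n. - (x ^ n) / of_nat n) sums ln (1 - x)"
    using ln_series'[of "-x"] assms by simp
  then have "(\<lambda>n. - (x ^ Suc n) / of_nat (Suc n)) sums ln (1 - x)"
    by (subst sums_Suc_iff) simp
  then have "(\<lambda>n. - (x ^ Suc n) / of_nat (Suc n) * (- 1 / x)) sums (ln (1 - x) * (- 1 / x))"
    by (rule sums_mult2)
  then show ?thesis
    using assms by (simp add: field_simps)
qed

lemma Li2_has_real_derivative:
  "\<bar>x\<bar> < 1 \<Longrightarrow> x \<noteq> 0 \<Longrightarrow> (Li2 has_real_derivative - ln (1 - x) / x) (at x)"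
  using Li2_has_real_derivative_series sums_power_div_Suc sums_unique by fastforce

lemma tendsto_ln_abs_mult_ln_one_minus: "((\<lambda>z::real. ln \<bar>z\<bar> * ln (1 - z)) \<longlongrightarrow> 0) (at 0)"
proof -
  have "((\<lambda>z::real. ln z * ln (1 - z)) \<longlongrightarrow> 0) (at_right 0)"
    by real_asymp
  then have "((\<lambda>z::real. ln \<bar>z\<bar> * ln (1 - z)) \<longlongrightarrow> 0) (at_right 0)"
    by (rule Lim_transform_eventually) (auto intro: eventually_mono[OF eventually_at_right_less])
  moreover have "((\<lambda>z::real. ln (- z) * ln (1 - z)) \<longlongrightarrow> 0) (at_left 0)"
    by real_asymp
  then have "((\<lambda>z::real. ln \<bar>z\<bar> * ln (1 - z)) \<longlongrightarrow> 0) (at_left 0)"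
    by (rule Lim_transform_eventually) (auto simp: eventually_at_left_field intro!: exI[of _ "-1"])
  ultimately show ?thesis
    by (simp add: filterlim_at_split)
qed

lemma rogers_L_0 [simp]: "rogers_L 0 = 0"
  by (simp add: rogers_L_def Li2_def)

lemma isCont_rogers_L:
  assumes "\<bar>x\<bar> < 1"
  shows "isCont rogers_L x"
proof -
  have "isCont (\<lambda>z::real. ln \<bar>z\<bar> * ln (1 - z)) x"
  proof (cases "x = 0")
    case True
    then show ?thesis
      using tendsto_ln_abs_mult_ln_one_minus by (simp add: isCont_def)
  qed (use assms in \<open>auto intro!: continuous_intros\<close>)
  moreover have "isCont Li2 x"
    using Li2_has_real_derivative_series[OF assms] by (rule DERIV_isCont)
  ultimately have "isCont (\<lambda>z. Li2 z + 1/2 * (ln \<bar>z\<bar> * ln (1 - z))) x"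
    using continuous_add[OF _ continuous_mult[OF continuous_const]] by blast
  then show ?thesis
    by (simp add: rogers_L_def [abs_def] mult.assoc)
qed

lemma isCont_rogers_L_compose [continuous_intros]:
  "isCont f t \<Longrightarrow> \<bar>f t\<bar> < 1 \<Longrightarrow> isCont (\<lambda>t. rogers_L (f t)) t"
  by (rule isCont_o2[OF _ isCont_rogers_L])

definition rogers_L' :: "real \<Rightarrow> real" where
  "rogers_L' z = - (ln (1 - z) / z + ln z / (1 - z)) / 2"

lemma rogers_L_has_real_derivative:
  assumes "0 < z" "z < 1"
  shows "(rogers_L has_real_derivative rogers_L' z) (at z)"
proof -
  have "((\<lambda>z. Li2 z + 1/2 * ln z * ln (1 - z)) has_real_derivative rogers_L' z) (at z)"
    using assms by (auto intro!: derivative_eq_intros Li2_has_real_derivative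
        simp: rogers_L'_def field_simps)
  then show ?thesis
    by (rule has_field_derivative_transform_within_open[of _ _ _ "{0<..<1}"])
      (use assms in \<open>auto simp: rogers_L_def\<close>)
qed

lemma rogers_L_has_real_derivative_compose [derivative_intros]:
  "(f has_real_derivative f') (at t) \<Longrightarrow> 0 < f t \<Longrightarrow> f t < 1 \<Longrightarrow>
    ((\<lambda>t. rogers_L (f t)) has_real_derivative rogers_L' (f t) * f') (at t)"
  using DERIV_chain2[OF rogers_L_has_real_derivative] by blast

lemma rogers_L_reflection:
  assumes "0 < x" "x < 1" "0 < y" "y < 1"
  shows "rogers_L x + rogers_L (1 - x) = rogers_L y + rogers_L (1 - y)"
proof (rule DERIV_isconst3[where f = "\<lambda>z. rogers_L z + rogers_L (1 - z)"])
  fix z :: real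
  assume "z \<in> {0<..<1}"
  then have "((\<lambda>z. rogers_L z + rogers_L (1 - z)) has_real_derivative
      rogers_L' z * 1 + rogers_L' (1 - z) * (0 - 1)) (at z)"
    by (intro derivative_intros) auto
  moreover have "rogers_L' (1 - z) = rogers_L' z"
    by (simp add: rogers_L'_def add.commute)
  ultimately show "((\<lambda>z. rogers_L z + rogers_L (1 - z)) has_real_derivative 0) (at z)"
    by simp
qed (use assms in auto)

lemma rogers_L'_five_term:
  fixes x t :: real
  assumes x: "0 < x" "x < 1" and t: "0 < t" "t < 1"
  defines "D \<equiv> 1 - x * t"
  shows "rogers_L' t = x * rogers_L' (x * t) + x * (x - 1) / D\<^sup>2 * rogers_L' (x * (1 - t) / D)
           + (1 - x) / D\<^sup>2 * rogers_L' (t * (1 - x) / D)"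
proof -
  define p q where "p = 1 - t" and "q = 1 - x"
  have pos: "0 < p" "0 < q" "0 < D"
    using x t mult_strict_mono[of x 1 t 1] by (simp_all add: p_def q_def D_def)
  have one_minus: "1 - x * p / D = q / D" "1 - t * q / D = p / D" "1 - x * t = D" "x - 1 = - q"
    using pos by (simp_all add: p_def q_def D_def field_simps)
  have ln_eqs: "ln (x * t) = ln x + ln t"
    "ln (x * p / D) = ln x + ln p - ln D" "ln (t * q / D) = ln t + ln q - ln D"
    "ln (q / D) = ln q - ln D" "ln (p / D) = ln p - ln D"
    using x t pos by (simp_all add: ln_mult ln_div)
  \<comment> \<open>With \<open>1 - t\<close>, \<open>1 - x\<close> and \<open>D\<close> kept abstract, \<open>field_simps\<close> only divides by atoms;
    what remains is a polynomial identity that is linear in the five logarithms.\<close>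
  show ?thesis
    unfolding rogers_L'_def p_def[symmetric] q_def[symmetric] one_minus ln_eqs using x t pos
    by (simp add: field_simps power2_eq_square) (use p_def q_def D_def in algebra)
qed

lemma rogers_L_five_term:
  fixes x y :: real
  assumes x: "0 < x" "x < 1" and y: "0 < y" "y < 1"
  shows "rogers_L x + rogers_L y =
    rogers_L (x * y) + rogers_L (x * (1 - y) / (1 - x * y)) + rogers_L (y * (1 - x) / (1 - x * y))"
proof -
  define F where "F t = rogers_L x + rogers_L t - rogers_L (x * t)
    - rogers_L (x * (1 - t) / (1 - x * t)) - rogers_L (t * (1 - x) / (1 - x * t))" for t
  have xt: "x * t \<le> t" "x * t \<le> x" if "0 \<le> t" "t < 1" for t
    using x that by (simp_all add: mult_left_le_one_le mult_right_le_one_le)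
  have bounds: "0 < 1 - x * t" "0 \<le> x * t" "x * t < 1"
      "0 < x * (1 - t) / (1 - x * t)" "x * (1 - t) / (1 - x * t) < 1"
      "0 \<le> t * (1 - x) / (1 - x * t)" "t * (1 - x) / (1 - x * t) < 1"
    if "0 \<le> t" "t < 1" for t
    using x that xt[OF that] by (simp_all add: divide_less_eq algebra_simps)
  have "F y = F 0"
  proof (rule DERIV_isconst_end[where f = F])
    show "continuous_on {0..y} F"
    proof (intro continuous_at_imp_continuous_on ballI)
      fix t
      assume "t \<in> {0..y}"
      then have t: "0 \<le> t" "t < 1"
        using y by auto
      show "isCont F t"
        unfolding F_def using x t bounds[OF t] by (intro continuous_intros) auto
    qed
  next
    fix t
    assume "0 < t" "t < y"
    then have t: "0 < t" "t < 1"
      using y by auto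
    note b = bounds[OF less_imp_le[OF t(1)] t(2)]
    have deriv_x_ratio:
        "((\<lambda>t. x * (1 - t) / (1 - x * t)) has_real_derivative x * (x - 1) / (1 - x * t)\<^sup>2) (at t)"
      and deriv_t_ratio:
        "((\<lambda>t. t * (1 - x) / (1 - x * t)) has_real_derivative (1 - x) / (1 - x * t)\<^sup>2) (at t)"
      using b by (auto intro!: derivative_eq_intros simp: field_simps power2_eq_square)
    have "(F has_real_derivative 0 + rogers_L' t * 1 - rogers_L' (x * t) * x
        - rogers_L' (x * (1 - t) / (1 - x * t)) * (x * (x - 1) / (1 - x * t)\<^sup>2)
        - rogers_L' (t * (1 - x) / (1 - x * t)) * ((1 - x) / (1 - x * t)\<^sup>2)) (at t)"
      unfolding F_def using x t b
      by (intro DERIV_diff DERIV_add DERIV_const rogers_L_has_real_derivative_compose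
          deriv_x_ratio deriv_t_ratio DERIV_ident DERIV_cmult_Id) auto
    then show "(F has_real_derivative 0) (at t)"
      using rogers_L'_five_term[OF x t] by (simp add: algebra_simps)
  qed (use y in auto)
  then show ?thesis
    by (simp add: F_def)
qed

definition rogers_tail :: "real \<Rightarrow> real \<Rightarrow> real" where
  "rogers_tail Q P = rogers_L ((Q - 1) * P / (Q * (P - 1))) + rogers_L ((Q - 1) / (P - 1))"

lemma rogers_L_telescoping_step:
  assumes Q: "1 < Q" and P: "Q < P"
  shows "rogers_L ((Q - 1)\<^sup>2 * P / (Q * (P - 1)\<^sup>2)) = rogers_tail Q P - rogers_tail Q (P * Q)"
proof -
  define x y where "x = (Q - 1) * P / (Q * (P - 1))" and "y = (Q - 1) / (P - 1)"
  define B where "B = Q * (P - 1)\<^sup>2"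
  have "P * Q > 1"
    using Q P less_1_mult[of P Q] by simp
  then have nz: "Q \<noteq> 0" "P - 1 \<noteq> 0" "P - Q \<noteq> 0" "P * Q - 1 \<noteq> 0" "B \<noteq> 0"
    using Q P by (auto simp: B_def)
  have bounds: "0 < x" "x < 1" "0 < y" "y < 1"
    using Q P by (simp_all add: x_def y_def divide_less_eq algebra_simps)
  have xy: "x * y = (Q - 1)\<^sup>2 * P / (Q * (P - 1)\<^sup>2)"
    using nz by (simp add: x_def y_def field_simps power2_eq_square)
  have "Q * (P - 1)\<^sup>2 - (Q - 1)\<^sup>2 * P = (P * Q - 1) * (P - Q)"
    by (simp add: algebra_simps power2_eq_square)
  then have den: "1 - x * y = (P * Q - 1) * (P - Q) / B"
    using nz by (simp add: xy B_def diff_divide_eq_iff)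
  have "1 - x = (P - Q) / (Q * (P - 1))" "1 - y = (P - Q) / (P - 1)"
    using nz by (simp_all add: x_def y_def field_simps)
  then have num: "x * (1 - y) = (Q - 1) * P * (P - Q) / B" "y * (1 - x) = (Q - 1) * (P - Q) / B"
    by (simp_all add: x_def y_def B_def power2_eq_square)
  have "x * (1 - y) / (1 - x * y) = (Q - 1) * (P * Q) / (Q * (P * Q - 1))"
    "y * (1 - x) / (1 - x * y) = (Q - 1) / (P * Q - 1)"
    unfolding num den using nz by simp_all
  with rogers_L_five_term[OF bounds] show ?thesis
    unfolding xy by (simp add: rogers_tail_def x_def y_def)
qed

lemma rogers_L_lucas_ratio_sums:
  fixes u :: real
  assumes "1 < u"
  shows "(\<lambda>k. rogers_L (((u - 1 / u) / (u ^ (k + 2) - 1 / u ^ (k + 2)))\<^sup>2)) sums rogers_L (1 / u\<^sup>2)"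
proof -
  define Q where "Q = u\<^sup>2"
  have Q: "1 < Q"
    using assms by (simp add: Q_def one_less_power)
  define g where "g k = rogers_tail Q (Q ^ (k + 2))" for k
  have term_eq: "((u - 1 / u) / (u ^ (k + 2) - 1 / u ^ (k + 2)))\<^sup>2
      = (Q - 1)\<^sup>2 * Q ^ (k + 2) / (Q * (Q ^ (k + 2) - 1)\<^sup>2)" for k
  proof -
    have "1 < u ^ (k + 2)"
      using assms by (intro one_less_power) auto
    then show ?thesis
      using assms by (simp add: Q_def field_simps power2_eq_square flip: power_mult_distrib power_mult)
  qed
  have "rogers_L (((u - 1 / u) / (u ^ (k + 2) - 1 / u ^ (k + 2)))\<^sup>2) = g k - g (Suc k)" for k
  proof -
    have "Q < Q ^ (k + 2)"
      using Q power_strict_increasing[of 1 "k + 2" Q] by simp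
    moreover have "Q ^ (k + 2) * Q = Q ^ (Suc k + 2)"
      by (simp add: mult_ac)
    ultimately show ?thesis
      unfolding term_eq g_def using rogers_L_telescoping_step[OF Q] by metis
  qed
  moreover have "g \<longlonglongrightarrow> rogers_L ((Q - 1) / Q) + rogers_L 0"
  proof -
    have "(\<lambda>k. (Q - 1) * Q ^ (k + 2) / (Q * (Q ^ (k + 2) - 1))) \<longlonglongrightarrow> (Q - 1) / Q"
      using Q by real_asymp (simp add: divide_inverse)
    moreover have "(\<lambda>k. (Q - 1) / (Q ^ (k + 2) - 1)) \<longlonglongrightarrow> 0"
      using Q by real_asymp
    moreover have "isCont rogers_L ((Q - 1) / Q)" "isCont rogers_L 0"
      using Q by (auto intro!: isCont_rogers_L)
    ultimately show ?thesis
      unfolding g_def rogers_tail_def by (intro tendsto_add isCont_tendsto_compose[of _ rogers_L])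
  qed
  ultimately have "(\<lambda>k. rogers_L (((u - 1 / u) / (u ^ (k + 2) - 1 / u ^ (k + 2)))\<^sup>2))
      sums (g 0 - (rogers_L ((Q - 1) / Q) + rogers_L 0))"
    by (simp add: telescope_sums')
  moreover have "g 0 = rogers_L (1 / Q) + rogers_L ((Q - 1) / Q)"
  proof -
    have factor: "Q ^ 2 - 1 = (Q - 1) * (Q + 1)"
      by (simp add: algebra_simps power2_eq_square)
    have "Q - 1 \<noteq> 0" "Q + 1 \<noteq> 0"
      using Q by auto
    then have "(Q - 1) * Q ^ 2 / (Q * (Q ^ 2 - 1)) = 1 - 1 / (Q + 1)"
      "(Q - 1) / (Q ^ 2 - 1) = 1 / (Q + 1)"
      unfolding factor by (simp_all add: power2_eq_square diff_divide_eq_iff)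
    then have "g 0 = rogers_L (1 / (Q + 1)) + rogers_L (1 - 1 / (Q + 1))"
      by (simp only: g_def rogers_tail_def add_0 add.commute)
    also have "\<dots> = rogers_L (1 / Q) + rogers_L (1 - 1 / Q)"
      using Q by (intro rogers_L_reflection) auto
    finally show ?thesis
      using Q by (simp add: diff_divide_distrib)
  qed
  ultimately show ?thesis
    by (simp add: Q_def)
qed

lemma floor_eq_of_plus_inverse:
  fixes u :: real and A :: int
  assumes "1 < u" "u + 1 / u = 2 * of_int A"
  shows "\<lfloor>u\<rfloor> = 2 * A - 1"
proof -
  have "0 < 1 / u" "1 / u < 1"
    using assms(1) by auto
  with assms(2) show ?thesis
    by (intro floor_unique) linarith+
qed

lemma cf_rem_period:
  fixes u :: real and A :: int
  assumes u: "2 < u" and A: "u + 1 / u = 2 * of_int A"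
  shows "cf_rem u (2 * k + 1) = u / (u - 1) \<and> cf_rem u (2 * k + 2) = u - 1"
proof -
  have floor_u: "\<lfloor>u\<rfloor> = 2 * A - 1"
    using u A by (intro floor_eq_of_plus_inverse) auto
  have "\<lfloor>u / (u - 1)\<rfloor> = 1"
    using u by (intro floor_unique) (simp_all add: field_simps)
  then have from_odd: "1 / (u / (u - 1) - of_int \<lfloor>u / (u - 1)\<rfloor>) = u - 1"
    using u by (simp add: field_simps)
  have "u - 1 - of_int \<lfloor>u - 1\<rfloor> = (u - 1) / u" "u - of_int \<lfloor>u\<rfloor> = (u - 1) / u"
    using u A by (simp_all add: floor_u field_simps)
  then have from_even: "1 / (u - 1 - of_int \<lfloor>u - 1\<rfloor>) = u / (u - 1)"
    and from_start: "1 / (u - of_int \<lfloor>u\<rfloor>) = u / (u - 1)"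
    by simp_all
  show ?thesis
  proof (induction k)
    case 0
    then show ?case
      using from_start from_odd by (simp add: numeral_2_eq_2)
  next
    case (Suc k)
    then show ?case
      using from_even from_odd by (simp add: numeral_2_eq_2)
  qed
qed

lemma cf_c_period:
  fixes u :: real and A :: int
  assumes u: "2 < u" and A: "u + 1 / u = 2 * of_int A"
  shows "cf_c u 0 = 2 * A - 1" "cf_c u (2 * k + 1) = 1" "cf_c u (2 * k + 2) = 2 * A - 2"
proof -
  have floor_u: "\<lfloor>u\<rfloor> = 2 * A - 1"
    using u A by (intro floor_eq_of_plus_inverse) auto
  then show "cf_c u 0 = 2 * A - 1"
    by (simp add: cf_c_def)
  have "\<lfloor>u / (u - 1)\<rfloor> = 1"
    using u by (intro floor_unique) (simp_all add: field_simps)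
  with floor_u cf_rem_period[OF assms, of k]
  show "cf_c u (2 * k + 1) = 1" "cf_c u (2 * k + 2) = 2 * A - 2"
    by (simp_all add: cf_c_def del: cf_rem.simps)
qed

fun lucas_U :: "int \<Rightarrow> nat \<Rightarrow> int" where
  "lucas_U A 0 = 0"
| "lucas_U A (Suc 0) = 1"
| "lucas_U A (Suc (Suc m)) = 2 * A * lucas_U A (Suc m) - lucas_U A m"

lemma lucas_U_closed_form:
  fixes u :: real and A :: int
  assumes "u \<noteq> 0" "u + 1 / u = 2 * of_int A"
  shows "of_int (lucas_U A m) * (u - 1 / u) = u ^ m - (1 / u) ^ m"
proof (induction m rule: induct_nat_012)
  case (ge2 m)
  have "of_int (lucas_U A (Suc (Suc m))) * (u - 1 / u)
      = (u + 1 / u) * (of_int (lucas_U A (Suc m)) * (u - 1 / u)) - of_int (lucas_U A m) * (u - 1 / u)"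
    using assms(2) by (simp add: algebra_simps)
  also have "\<dots> = u ^ Suc (Suc m) - (1 / u) ^ Suc (Suc m)"
    unfolding ge2.IH using assms(1) by (simp add: field_simps)
  finally show ?case .
qed simp_all

lemma cf_hh_eq_lucas_U:
  fixes u :: real and A :: int
  assumes u: "2 < u" and A: "u + 1 / u = 2 * of_int A"
  shows "cf_hh u (2 * k + 1) = lucas_U A (k + 1)
    \<and> cf_hh u (2 * k + 2) = lucas_U A (k + 2) - lucas_U A (k + 1)"
proof (induction k)
  case 0
  show ?case
    using cf_c_period(1)[OF u A] by (simp add: numeral_2_eq_2)
next
  case (Suc k)
  have idx: "2 * Suc k + 1 = Suc (Suc (2 * k + 1))" "Suc (2 * k + 1) = 2 * k + 2"
    "2 * Suc k + 2 = Suc (Suc (2 * k + 2))" "Suc (2 * k + 2) = 2 * Suc k + 1"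
    by simp_all
  note IH = Suc.IH[THEN conjunct1] Suc.IH[THEN conjunct2]
  have odd: "cf_hh u (2 * Suc k + 1) = lucas_U A (k + 2)"
    unfolding idx(1) cf_hh.simps(3) unfolding idx(2) IH cf_c_period(2)[OF u A] by simp
  have "cf_hh u (2 * Suc k + 2)
      = (2 * A - 2) * lucas_U A (k + 2) + (lucas_U A (k + 2) - lucas_U A (k + 1))"
    unfolding idx(3) cf_hh.simps(3) unfolding idx(4) odd IH cf_c_period(3)[OF u A] ..
  with odd show ?case
    by (simp add: algebra_simps numeral_3_eq_3)
qed

lemma cf_h_odd:
  fixes u :: real and A :: int
  assumes u: "2 < u" and A: "u + 1 / u = 2 * of_int A"
  shows "of_int (cf_h u (2 * k + 1)) = (u ^ (k + 2) - 1 / u ^ (k + 2)) / (u - 1 / u)"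
proof -
  have "cf_h u (2 * k + 1) = lucas_U A (k + 2)"
    using cf_hh_eq_lucas_U[OF u A, of "k + 1"] by (simp add: cf_h_def)
  moreover have "1 / u < 1"
    using u by simp
  then have "u - 1 / u \<noteq> 0"
    using u by linarith
  ultimately show ?thesis
    using lucas_U_closed_form[of u A "k + 2"] u A by (simp add: eq_divide_eq power_one_over)
qed

lemma pell_unit:
  fixes n a b :: nat
  assumes n: "n \<ge> 2" and b: "b > 0" and pell: "int a ^ 2 - int n * int b ^ 2 = 1"
  defines "u \<equiv> a + b * sqrt n"
  shows "2 < u" "u + 1 / u = 2 * of_int (int a)"
proof -
  have "2 \<le> a"
  proof (rule ccontr)
    assume "\<not> 2 \<le> a"
    then have "a ^ 2 \<le> 1 ^ 2"
      by (intro power_mono) auto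
    moreover have "2 * 1 \<le> n * b ^ 2"
      using n b by (intro mult_mono) auto
    ultimately show False
      using pell by (simp flip: of_nat_power of_nat_mult)
  qed
  moreover have "0 < b * sqrt n"
    using n b by simp
  ultimately show "2 < u"
    by (simp add: u_def)
  have "(real a)\<^sup>2 - real n * (real b)\<^sup>2 = 1"
    using pell by (simp flip: of_nat_power of_nat_mult)
  then have "u * (a - b * sqrt n) = 1"
    by (simp add: u_def algebra_simps power2_eq_square flip: power2_eq_square)
  then have "1 / u = a - b * sqrt n"
    by (metis mult_zero_left nonzero_mult_div_cancel_left zero_neq_one)
  then show "u + 1 / u = 2 * of_int (int a)"
    by (simp add: u_def)
qed

theorem theorem2:
  fixes n :: nat and a b :: nat
  assumes "n \<ge> 2"
    and "\<not> (\<exists>m::nat. m ^ 2 = n)"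
    and "a > 0" and "b > 0"
    and "int a ^ 2 - int n * int b ^ 2 = 1"
  shows "(\<lambda>k. rogers_L (1 / (real_of_int (cf_h (a + b * sqrt n) (2 * k + 1)))\<^sup>2))
           sums rogers_L (1 / (a + b * sqrt n)\<^sup>2)"
proof -
  \<comment> \<open>The hypotheses that \<open>n\<close> is not a square and \<open>a > 0\<close> follow from the Pell equation
    with \<open>b > 0\<close>.\<close>
  define u where "u = a + b * sqrt n"
  have u: "2 < u" and A: "u + 1 / u = 2 * of_int (int a)"
    using pell_unit[OF assms(1,4,5)] by (simp_all add: u_def)
  have "rogers_L (1 / (real_of_int (cf_h u (2 * k + 1)))\<^sup>2)
      = rogers_L (((u - 1 / u) / (u ^ (k + 2) - 1 / u ^ (k + 2)))\<^sup>2)" for k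
    using cf_h_odd[OF u A] by (simp add: power_divide)
  with rogers_L_lucas_ratio_sums[of u] u show ?thesis
    by (simp add: u_def)
qed

end
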